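(* Under the standing assumptions (A) below, let $\Omega'=\{t\in[0,L]:\tau(t)\ne\pm\lambda\}\cup\Omega$. Then $\Omega'\setminus\Omega$ is a discrete set.
   Context: Standing assumptions (A): $n\ge2$, $L>0$, $\beta\colon[0,L]\to(0,\infty)$ of bounded variation with $1/\beta$ bounded; $\tau\in W^{1,\infty}((0,L);S^{n-1})$ with $k=\operatorname{ess\,sup}|\tau'|>0$; $\lambda\in S^{n-1}$ and $u\in W^{1,\infty}((0,L);\mathbb{R}^n)\setminus\{0\}$ such that $u'+(u\cdot\tau')\tau=\beta(\lambda-(\lambda\cdot\tau)\tau)$ and $|u|\tau'=ku$ a.e. in $(0,L)$; $f=k|u|$, which then satisfies $f'=\beta\,\lambda\cdot\tau'$ and $f(\tau''+k^2\tau)=\beta k^2\,\mathrm{proj}^\perp_{\tau,\tau'}(\lambda)$ weakly in $(0,L)$ (where $\mathrm{proj}^\perp_{V,W}$ is the orthogonal projection onto the orthogonal complement of $\mathrm{span}\{V,W\}$); $\Omega=\{t\in[0,L]:f(t)>0\}$ (open relative to $[0,L]$); and $\tau(t),\tau'(t),\lambda$ are linearly dependent for every $t\in\Omega$ (note $\tau'$ is continuous on $\Omega$). *)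

theory Defs
  imports "HOL-Analysis.Analysis" "HOL-Probability.Essential_Supremum"
begin

definition bounded_variation_on :: "(real \<Rightarrow> real) \<Rightarrow> real \<Rightarrow> real \<Rightarrow> bool" where
  "bounded_variation_on g a b \<longleftrightarrow>
     (\<exists>V. \<forall>ts::real list. sorted ts \<and> set ts \<subseteq> {a..b} \<longrightarrow>
        (\<Sum>i<length ts - 1. \<bar>g (ts ! Suc i) - g (ts ! i)\<bar>) \<le> V)"

end

theory Submission
  imports Defs
begin

text \<open>Let \<open>t0\<close> be a zero of \<open>u\<close> with \<open>\<tau> t0 \<noteq> \<plusminus>lam\<close>, and let \<open>v\<close> be the (nonzero) component of
  \<open>lam\<close> orthogonal to \<open>\<tau> t0\<close>. Pairing the equation for \<open>u'\<close> with \<open>v\<close> gives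
  \<open>(u \<bullet> v)' \<ge> \<beta> (lam - (lam \<bullet> \<tau>) \<tau>) \<bullet> v - k \<parallel>u\<parallel> \<parallel>v\<parallel>\<close> a.e., since \<open>\<parallel>u\<parallel> \<tau>' = k u\<close> bounds the
  coupling term by \<open>k \<parallel>u\<parallel>\<close>. Near \<open>t0\<close> the first term is close to \<open>\<beta> \<parallel>v\<parallel>\<^sup>2\<close>, which is bounded away from
  zero because \<open>1 / \<beta>\<close> is bounded, and the second is small, so the Lipschitz function \<open>u \<bullet> v\<close> has positive derivative a.e. and is
  therefore strictly increasing there; hence \<open>t0\<close> is an isolated zero of \<open>u\<close>. Points of
  \<open>\<Omega>' - \<Omega>\<close> are exactly such zeros.\<close>

lemma negligible_lipschitz_image:
  fixes f :: "'M::euclidean_space \<Rightarrow> 'N::euclidean_space"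
  assumes "DIM('M) \<le> DIM('N)" "C-lipschitz_on S f" "negligible N" "N \<subseteq> S"
  shows "negligible (f ` N)"
proof (rule negligible_locally_Lipschitz_image[OF assms(1,3)])
  fix x assume "x \<in> N"
  then have "\<forall>y \<in> N \<inter> UNIV. norm (f y - f x) \<le> C * norm (y - x)"
    using lipschitz_onD[OF assms(2)] assms(4) by (auto simp: dist_norm)
  then show "\<exists>T B. open T \<and> x \<in> T \<and> (\<forall>y \<in> N \<inter> T. norm (f y - f x) \<le> B * norm (y - x))"
    by blast
qed

lemma AE_lborel_negligible_exception:
  assumes "AE t in lborel. P t"
  obtains N where "negligible N" "\<And>t. t \<notin> N \<Longrightarrow> P t"
proof -
  obtain N where "\<And>t. t \<in> space lborel - N \<Longrightarrow> P t" "N \<in> null_sets lborel"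
    using AE_E3[OF assms] by blast
  then show thesis
    by (intro that[of N]) (auto simp: negligible_iff_null_sets null_sets_completionI)
qed

text \<open>Were \<open>g b < g a\<close>, pick a value \<open>y\<close> between them outside the null set \<open>g ` N\<close>;
  at the last point where \<open>g\<close> takes the value \<open>y\<close> the derivative exists and is positive,
  so \<open>g\<close> exceeds \<open>y\<close> just to the right and must return to \<open>y\<close> before reaching \<open>b\<close>.\<close>
lemma lipschitz_mono_if_deriv_pos_ae:
  fixes g :: "real \<Rightarrow> real"
  assumes ab: "a \<le> b" and lip: "C-lipschitz_on {a..b} g" and N: "negligible N"
    and der: "\<And>t. t \<in> {a<..<b} - N \<Longrightarrow> \<exists>d>0. (g has_real_derivative d) (at t)"
  shows "g a \<le> g b"
proof (rule ccontr)
  assume "\<not> g a \<le> g b"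
  then have gba: "g b < g a" by simp
  have cont: "continuous_on {a..b} g" using lip by (rule lipschitz_on_continuous_on)
  define N' where "N' = (N \<union> {a, b}) \<inter> {a..b}"
  have "negligible N'"
    unfolding N'_def using N by (simp add: negligible_Int)
  then have "negligible (g ` N')"
    using negligible_lipschitz_image[OF _ lip] by (auto simp: N'_def)
  moreover have "\<not> negligible {g b<..<g a}"
    using open_not_negligible[of "{g b<..<g a}"] gba by auto
  ultimately obtain y where y: "y \<in> {g b<..<g a}" "y \<notin> g ` N'"
    by (metis negligible_subset subsetI)
  define S where "S = {t\<in>{a..b}. g t = y}"
  have "S \<noteq> {}" using IVT2'[of g b y a] y ab cont unfolding S_def by force
  moreover have bdd: "bdd_above S" unfolding S_def by (auto intro: bdd_aboveI[of _ b])
  moreover have "closed S" unfolding S_def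
    using continuous_closed_preimage_constant[OF cont closed_atLeastAtMost] by simp
  ultimately have tS: "Sup S \<in> S" by (rule closed_contains_Sup)
  define t where "t = Sup S"
  have tab: "t \<in> {a<..<b} - N" using tS y(2) unfolding t_def S_def N'_def by force
  then obtain d where "d > 0" "(g has_real_derivative d) (at t)" using der by blast
  then obtain e where e: "e > 0" "\<And>r. 0 < r \<Longrightarrow> r < e \<Longrightarrow> g t < g (t + r)"
    using DERIV_pos_inc_right by blast
  define s where "s = t + min (e/2) ((b - t)/2)"
  have s: "t < s" "s < b" "s - t < e" using e(1) tab unfolding s_def by (auto simp: min_def field_simps)
  have "y < g s" using e(2)[of "s - t"] s tS unfolding t_def S_def by auto
  moreover have "continuous_on {s..b} g" using cont s tab by (force intro: continuous_on_subset)
  ultimately obtain r where r: "s \<le> r" "r \<le> b" "g r = y"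
    using IVT2'[of g b y s] y s by auto
  then have "r \<in> S" using s tab unfolding S_def by auto
  then have "r \<le> t" unfolding t_def using bdd by (rule cSup_upper)
  then show False using r s by linarith
qed

lemma lipschitz_strict_mono_if_deriv_pos_ae:
  fixes g :: "real \<Rightarrow> real"
  assumes ab: "a < b" and lip: "C-lipschitz_on {a..b} g" and N: "negligible N"
    and der: "\<And>t. t \<in> {a<..<b} - N \<Longrightarrow> \<exists>d>0. (g has_real_derivative d) (at t)"
  shows "g a < g b"
proof (rule ccontr)
  assume "\<not> g a < g b"
  have mono: "g x \<le> g y" if xy: "a \<le> x" "x \<le> y" "y \<le> b" for x y
  proof (rule lipschitz_mono_if_deriv_pos_ae[OF \<open>x \<le> y\<close> _ N])
    show "C-lipschitz_on {x..y} g" using lipschitz_on_mono[OF lip, of "{x..y}" C] xy by auto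
    show "\<exists>d>0. (g has_real_derivative d) (at t)" if "t \<in> {x<..<y} - N" for t
      using der[of t] that xy by auto
  qed
  have const: "g s = g a" if "s \<in> {a..b}" for s
    using mono[of a s] mono[of s b] that \<open>\<not> g a < g b\<close> by auto
  have "{a<..<b} - N \<noteq> {}"
  proof
    assume "{a<..<b} - N = {}"
    then have "negligible {a<..<b}" using negligible_subset[OF N] by blast
    then show False using open_not_negligible[of "{a<..<b}"] ab by auto
  qed
  then obtain t where t: "t \<in> {a<..<b} - N" by blast
  then obtain d where d: "d > 0" "(g has_real_derivative d) (at t)" using der by blast
  have "g t = g y" if "\<bar>t - y\<bar> < min (t - a) (b - t)" for y
  proof -
    have "y \<in> {a..b}" using t that by (auto simp: abs_less_iff)
    then show ?thesis using const[of t] const[of y] t by auto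
  qed
  then have "d = 0" using t by (intro DERIV_local_const[OF d(2), of "min (t - a) (b - t)"]) auto
  then show False using d by simp
qed

lemma orthogonal_component_nonzero:
  fixes T lam :: "'a::real_inner"
  assumes "norm T = 1" "norm lam = 1" "T \<noteq> lam" "T \<noteq> - lam"
  shows "lam - (lam \<bullet> T) *\<^sub>R T \<noteq> 0"
proof
  assume "lam - (lam \<bullet> T) *\<^sub>R T = 0"
  then have lam: "lam = (lam \<bullet> T) *\<^sub>R T" by simp
  then have "norm lam = \<bar>lam \<bullet> T\<bar>" using assms(1) by (metis norm_scaleR mult.right_neutral)
  then have "lam \<bullet> T = 1 \<or> lam \<bullet> T = -1" using assms(2) by linarith
  then show False using lam assms(3,4) by auto
qed

lemma inner_deriv_lower_bound:
  fixes u u' T T' lam v :: "'a::real_inner"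
  assumes ode: "u' + (u \<bullet> T') *\<^sub>R T = \<beta> *\<^sub>R (lam - (lam \<bullet> T) *\<^sub>R T)"
    and curv: "norm u *\<^sub>R T' = k *\<^sub>R u" and "norm T = 1" "k \<ge> 0"
  shows "u' \<bullet> v \<ge> \<beta> * ((lam - (lam \<bullet> T) *\<^sub>R T) \<bullet> v) - k * norm u * norm v"
proof -
  have "\<bar>u \<bullet> T'\<bar> \<le> norm u * norm T'" by (rule Cauchy_Schwarz_ineq2)
  also have "\<dots> = k * norm u" using arg_cong[OF curv, of norm] \<open>k \<ge> 0\<close> by simp
  finally have "\<bar>(u \<bullet> T') * (T \<bullet> v)\<bar> \<le> k * norm u * norm v"
    unfolding abs_mult using Cauchy_Schwarz_ineq2[of T v] \<open>norm T = 1\<close>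
    by (intro mult_mono) auto
  moreover have "u' \<bullet> v = \<beta> * ((lam - (lam \<bullet> T) *\<^sub>R T) \<bullet> v) - (u \<bullet> T') * (T \<bullet> v)"
    using arg_cong[OF ode, of "\<lambda>w. w \<bullet> v"] by (simp add: inner_add_left)
  ultimately show ?thesis by linarith
qed

lemma pos_lower_bound_if_inverse_bounded:
  fixes f :: "'a \<Rightarrow> real"
  assumes "\<forall>t\<in>S. f t > 0" "bounded ((\<lambda>t. 1 / f t) ` S)"
  obtains m where "m > 0" "\<And>t. t \<in> S \<Longrightarrow> m \<le> f t"
proof -
  obtain B where B: "\<And>t. t \<in> S \<Longrightarrow> \<bar>1 / f t\<bar> \<le> B"
    using assms(2) unfolding bounded_iff by auto
  show thesis
  proof (rule that[of "1 / max B 1"])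
    fix t assume "t \<in> S"
    then have "1 / f t \<le> max B 1" "f t > 0" using B assms(1) by force+
    then show "1 / max B 1 \<le> f t" by (simp add: field_simps)
  qed simp
qed

lemma lipschitz_on_inner_left:
  fixes f :: "'b::metric_space \<Rightarrow> 'a::real_inner"
  assumes "C-lipschitz_on S f"
  shows "(C * norm v)-lipschitz_on S (\<lambda>x. f x \<bullet> v)"
proof (rule lipschitz_onI)
  show "0 \<le> C * norm v" using lipschitz_on_nonneg[OF assms] by simp
  fix x y assume "x \<in> S" "y \<in> S"
  have "dist (f x \<bullet> v) (f y \<bullet> v) \<le> norm (f x - f y) * norm v"
    unfolding dist_real_def inner_diff_left[symmetric] by (rule Cauchy_Schwarz_ineq2)
  also have "\<dots> \<le> C * dist x y * norm v"
    using lipschitz_onD[OF assms \<open>x \<in> S\<close> \<open>y \<in> S\<close>] by (simp add: dist_norm mult_right_mono)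
  finally show "dist (f x \<bullet> v) (f y \<bullet> v) \<le> C * norm v * dist x y" by (simp add: ac_simps)
qed

lemma zero_isolated_if_transversal:
  fixes u u' \<tau> \<tau>' :: "real \<Rightarrow> 'a::real_inner" and lam :: 'a
  assumes t0: "t0 \<in> {a..b}" "u t0 = 0" "\<tau> t0 \<noteq> lam" "\<tau> t0 \<noteq> - lam"
    and lam: "norm lam = 1"
    and sphere: "\<And>t. t \<in> {a..b} \<Longrightarrow> norm (\<tau> t) = 1"
    and \<tau>_cont: "continuous_on {a..b} \<tau>"
    and u_lip: "C-lipschitz_on {a..b} u"
    and \<beta>: "m > 0" "\<And>t. t \<in> {a..b} \<Longrightarrow> m \<le> \<beta> t"
    and k: "k \<ge> 0"
    and ode: "AE t in lborel. t \<in> {a<..<b} \<longrightarrow> (u has_vector_derivative u' t) (at t) \<and>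
          u' t + (u t \<bullet> \<tau>' t) *\<^sub>R \<tau> t = \<beta> t *\<^sub>R (lam - (lam \<bullet> \<tau> t) *\<^sub>R \<tau> t) \<and>
          norm (u t) *\<^sub>R \<tau>' t = k *\<^sub>R u t"
  obtains \<delta> where "\<delta> > 0" "\<And>t. t \<in> {a..b} \<Longrightarrow> \<bar>t - t0\<bar> < \<delta> \<Longrightarrow> u t = 0 \<Longrightarrow> t = t0"
proof -
  define v where "v = lam - (lam \<bullet> \<tau> t0) *\<^sub>R \<tau> t0"
  define \<phi> where "\<phi> t = (lam - (lam \<bullet> \<tau> t) *\<^sub>R \<tau> t) \<bullet> v" for t
  have "v \<noteq> 0" unfolding v_def using orthogonal_component_nonzero sphere t0 lam by blast
  then have pos: "\<phi> t0 > 0" "norm v > 0" unfolding \<phi>_def v_def[symmetric] by auto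
  have "(\<phi> \<longlongrightarrow> \<phi> t0) (at t0 within {a..b})"
    unfolding \<phi>_def using t0(1) \<tau>_cont unfolding continuous_on_def
    by (intro tendsto_intros) auto
  then have "\<forall>\<^sub>F t in at t0 within {a..b}. \<phi> t0 / 2 < \<phi> t"
    using pos by (intro order_tendstoD(1)) auto
  moreover have "((\<lambda>t. k * norm (u t) * norm v) \<longlongrightarrow> k * norm (u t0) * norm v) (at t0 within {a..b})"
    using t0(1) lipschitz_on_continuous_on[OF u_lip] unfolding continuous_on_def
    by (intro tendsto_intros) auto
  then have "\<forall>\<^sub>F t in at t0 within {a..b}. k * norm (u t) * norm v < m * (\<phi> t0 / 2)"
    using pos \<beta>(1) t0(2) by (intro order_tendstoD(2)) auto
  ultimately have "\<forall>\<^sub>F t in at t0 within {a..b}.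
      \<phi> t0 / 2 < \<phi> t \<and> k * norm (u t) * norm v < m * (\<phi> t0 / 2)"
    by (rule eventually_conj)
  then obtain \<delta> where \<delta>: "\<delta> > 0" and near_punctured: "\<And>t. t \<in> {a..b} \<Longrightarrow> t \<noteq> t0 \<Longrightarrow>
      \<bar>t - t0\<bar> < \<delta> \<Longrightarrow> \<phi> t0 / 2 < \<phi> t \<and> k * norm (u t) * norm v < m * (\<phi> t0 / 2)"
    unfolding eventually_at dist_real_def by blast
  have near: "\<phi> t0 / 2 < \<phi> t \<and> k * norm (u t) * norm v < m * (\<phi> t0 / 2)"
    if "t \<in> {a..b}" "\<bar>t - t0\<bar> < \<delta>" for t
    using near_punctured[OF that(1) _ that(2)] pos \<beta>(1) t0(2) by (cases "t = t0") auto
  obtain N where N: "negligible N" and ode_N: "\<And>t. t \<notin> N \<Longrightarrow> t \<in> {a<..<b} \<longrightarrow>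
      (u has_vector_derivative u' t) (at t) \<and>
      u' t + (u t \<bullet> \<tau>' t) *\<^sub>R \<tau> t = \<beta> t *\<^sub>R (lam - (lam \<bullet> \<tau> t) *\<^sub>R \<tau> t) \<and>
      norm (u t) *\<^sub>R \<tau>' t = k *\<^sub>R u t"
    using AE_lborel_negligible_exception[OF ode] by blast
  have deriv: "\<exists>d>0. ((\<lambda>t. u t \<bullet> v) has_real_derivative d) (at s)"
    if s: "s \<in> {a<..<b} - N" "\<bar>s - t0\<bar> < \<delta>" for s
  proof (intro exI conjI)
    have sab: "s \<in> {a..b}" using s by auto
    have "m * (\<phi> t0 / 2) \<le> \<beta> s * \<phi> s"
      using near[OF sab s(2)] \<beta>(2)[OF sab] pos \<beta>(1) by (intro mult_mono) auto
    also have "\<beta> s * \<phi> s - k * norm (u s) * norm v \<le> u' s \<bullet> v"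
      unfolding \<phi>_def using ode_N[of s] s sphere[OF sab] k by (intro inner_deriv_lower_bound) auto
    ultimately show "u' s \<bullet> v > 0" using near[OF sab s(2)] by linarith
    show "((\<lambda>t. u t \<bullet> v) has_real_derivative u' s \<bullet> v) (at s)"
      unfolding has_real_derivative_iff_has_vector_derivative using ode_N[of s] s
      by (intro bounded_linear.has_vector_derivative[OF bounded_linear_inner_left]) auto
  qed
  have increasing: "u x \<bullet> v < u y \<bullet> v"
    if "x < y" "x \<in> {a..b}" "y \<in> {a..b}" "\<bar>x - t0\<bar> < \<delta>" "\<bar>y - t0\<bar> < \<delta>" for x y
  proof (rule lipschitz_strict_mono_if_deriv_pos_ae[OF \<open>x < y\<close> _ N])
    show "(C * norm v)-lipschitz_on {x..y} (\<lambda>t. u t \<bullet> v)"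
      using lipschitz_on_mono[OF lipschitz_on_inner_left[OF u_lip]] that by auto
  qed (use deriv that in auto)
  show thesis
  proof (rule that[OF \<delta>])
    fix t assume "t \<in> {a..b}" "\<bar>t - t0\<bar> < \<delta>" "u t = 0"
    then show "t = t0"
      using increasing[of t t0] increasing[of t0 t] t0(1,2) \<delta> by (cases t t0 rule: linorder_cases) auto
  qed
qed

theorem mainTheorem15:
  fixes L k :: real
    and \<beta> :: "real \<Rightarrow> real"
    and \<tau> \<tau>' u u' :: "real \<Rightarrow> real ^ 'n"
    and lam :: "real ^ 'n"
  assumes n2: "CARD('n) \<ge> 2"
    and Lpos: "L > 0"
    and beta_pos: "\<forall>t\<in>{0..L}. \<beta> t > 0"
    and beta_bv: "bounded_variation_on \<beta> 0 L"
    and beta_inv_bdd: "bounded ((\<lambda>t. 1 / \<beta> t) ` {0..L})"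
    and tau_lip: "\<exists>C. C-lipschitz_on {0..L} \<tau>"
    and tau_sphere: "\<forall>t\<in>{0..L}. norm (\<tau> t) = 1"
    and tau_deriv: "AE t in lborel. t \<in> {0<..<L} \<longrightarrow> (\<tau> has_vector_derivative \<tau>' t) (at t)"
    and k_def: "esssup (lebesgue_on {0<..<L}) (\<lambda>t. ereal (norm (\<tau>' t))) = ereal k"
    and kpos: "k > 0"
    and lam_unit: "norm lam = 1"
    and u_lip: "\<exists>C. C-lipschitz_on {0..L} u"
    and u_deriv: "AE t in lborel. t \<in> {0<..<L} \<longrightarrow> (u has_vector_derivative u' t) (at t)"
    and u_nonzero: "\<exists>t\<in>{0..L}. u t \<noteq> 0"
    and eq1: "AE t in lborel. t \<in> {0<..<L} \<longrightarrow>
               u' t + (u t \<bullet> \<tau>' t) *\<^sub>R \<tau> t = \<beta> t *\<^sub>R (lam - (lam \<bullet> \<tau> t) *\<^sub>R \<tau> t)"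
    and eq2: "AE t in lborel. t \<in> {0<..<L} \<longrightarrow> norm (u t) *\<^sub>R \<tau>' t = k *\<^sub>R u t"
    and tau'_cont: "continuous_on {t\<in>{0..L}. k * norm (u t) > 0} \<tau>'"
    and lindep: "\<forall>t\<in>{t\<in>{0..L}. k * norm (u t) > 0}.
                   \<exists>a b c. (a, b, c) \<noteq> (0::real, 0::real, 0::real) \<and>
                     a *\<^sub>R \<tau> t + b *\<^sub>R \<tau>' t + c *\<^sub>R lam = 0"
  shows "discrete (({t\<in>{0..L}. \<tau> t \<noteq> lam \<and> \<tau> t \<noteq> - lam} \<union> {t\<in>{0..L}. k * norm (u t) > 0})
                    - {t\<in>{0..L}. k * norm (u t) > 0})"
proof (rule discreteI)
  let ?\<Omega> = "{t\<in>{0..L}. k * norm (u t) > 0}"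
  have zero_iff: "u t = 0 \<longleftrightarrow> \<not> k * norm (u t) > 0" for t
    using kpos by (simp add: zero_less_mult_iff)
  fix t0 assume t0: "t0 \<in> ({t\<in>{0..L}. \<tau> t \<noteq> lam \<and> \<tau> t \<noteq> - lam} \<union> ?\<Omega>) - ?\<Omega>"
  then have t0_zero: "t0 \<in> {0..L}" "u t0 = 0" "\<tau> t0 \<noteq> lam" "\<tau> t0 \<noteq> - lam"
    using zero_iff by auto
  obtain m where m: "m > 0" "\<And>t. t \<in> {0..L} \<Longrightarrow> m \<le> \<beta> t"
    using pos_lower_bound_if_inverse_bounded[OF beta_pos beta_inv_bdd] by blast
  obtain C where u_C: "C-lipschitz_on {0..L} u" using u_lip by blast
  have \<tau>_cont: "continuous_on {0..L} \<tau>" using tau_lip lipschitz_on_continuous_on by blast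
  have ode: "AE t in lborel. t \<in> {0<..<L} \<longrightarrow> (u has_vector_derivative u' t) (at t) \<and>
      u' t + (u t \<bullet> \<tau>' t) *\<^sub>R \<tau> t = \<beta> t *\<^sub>R (lam - (lam \<bullet> \<tau> t) *\<^sub>R \<tau> t) \<and>
      norm (u t) *\<^sub>R \<tau>' t = k *\<^sub>R u t"
    using u_deriv eq1 eq2 by eventually_elim auto
  obtain \<delta> where "\<delta> > 0"
    and isolated: "\<And>t. t \<in> {0..L} \<Longrightarrow> \<bar>t - t0\<bar> < \<delta> \<Longrightarrow> u t = 0 \<Longrightarrow> t = t0"
    using zero_isolated_if_transversal[OF t0_zero lam_unit _ \<tau>_cont u_C m _ ode] tau_sphere kpos
    by auto
  then show "t0 isolated_in (({t\<in>{0..L}. \<tau> t \<noteq> lam \<and> \<tau> t \<noteq> - lam} \<union> ?\<Omega>) - ?\<Omega>)"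
    unfolding isolated_in_dist_Ex_iff using t0 zero_iff by (auto simp: dist_real_def abs_minus_commute)
qed

end
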